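(* Let $k\ge2$ be the cache size, let $1\le r\le k-1$ and $N=k+r$. For the cycle access graph $C_N$ on $N$ vertices, \[\mathcal{I}^{C_N}[\mathrm{FWF},\mathrm{LRU}]=\left[0,\ 1-\frac1k\right].\]
   Context: Paging: a cache holds at most $k$ pages and is initially empty. A request to a page in the cache is a hit; otherwise it is a fault, the page is brought into the cache, evicting a page first if the cache is full. $\mathcal{A}(I)$ is the number of faults of $\mathcal{A}$ on request sequence $I$. LRU evicts the least recently requested cached page; FWF, on a fault with a full cache, empties the cache and then brings in the requested page. Access graph: a graph $G$ whose vertices are the pages; a request sequence respects $G$ if any two consecutive requests are identical or adjacent in $G$; $L(G)$ is the set of such sequences. $C_N$ is the cycle on $N$ vertices. Relative interval: $\mathrm{Min}_{\mathcal{A},\mathcal{B}}(n,G)=\min\{\mathcal{A}(I)-\mathcal{B}(I): I\in L(G),|I|=n\}$, $\mathrm{Max}_{\mathcal{A},\mathcal{B}}(n,G)$ analogously with max; $\mathrm{Min}^G(\mathcal{A},\mathcal{B})=\liminf_{n\to\infty}\mathrm{Min}_{\mathcal{A},\mathcal{B}}(n,G)/n$, $\mathrm{Max}^G(\mathcal{A},\mathcal{B})=\limsup_{n\to\infty}\mathrm{Max}_{\mathcal{A},\mathcal{B}}(n,G)/n$, and $\mathcal{I}^G[\mathcal{A},\mathcal{B}]=[\mathrm{Min}^G(\mathcal{A},\mathcal{B}),\mathrm{Max}^G(\mathcal{A},\mathcal{B})]$. *)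

theory Defs
  imports "HOL-Analysis.Analysis"
begin

text \<open>LRU: the cache is a list of cached pages ordered by recency
  (most recently requested first). On a fault with a full cache the
  least recently requested page (the last one) is evicted.\<close>

fun lru_faults :: "nat \<Rightarrow> 'a list \<Rightarrow> 'a list \<Rightarrow> nat" where
  "lru_faults k cache [] = 0"
| "lru_faults k cache (p # ps) =
     (if p \<in> set cache then lru_faults k (p # removeAll p cache) ps
      else Suc (lru_faults k (p # (if length cache < k then cache else butlast cache)) ps))"

definition LRU :: "nat \<Rightarrow> 'a list \<Rightarrow> nat" where
  "LRU k I = lru_faults k [] I"

fun fwf_faults :: "nat \<Rightarrow> 'a set \<Rightarrow> 'a list \<Rightarrow> nat" where
  "fwf_faults k C [] = 0"
| "fwf_faults k C (p # ps) =
     (if p \<in> C then fwf_faults k C ps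
      else Suc (fwf_faults k (if card C < k then insert p C else {p}) ps))"

definition FWF :: "nat \<Rightarrow> 'a list \<Rightarrow> nat" where
  "FWF k I = fwf_faults k {} I"

definition respects_graph :: "'a set \<Rightarrow> ('a \<Rightarrow> 'a \<Rightarrow> bool) \<Rightarrow> 'a list \<Rightarrow> bool" where
  "respects_graph V adj I \<longleftrightarrow> set I \<subseteq> V \<and> successively (\<lambda>x y. x = y \<or> adj x y) I"

definition cycle_adj :: "nat \<Rightarrow> nat \<Rightarrow> nat \<Rightarrow> bool" where
  "cycle_adj N i j \<longleftrightarrow> j = (i + 1) mod N \<or> i = (j + 1) mod N"

definition rel_min :: "('a list \<Rightarrow> nat) \<Rightarrow> ('a list \<Rightarrow> nat) \<Rightarrow> 'a set \<Rightarrow> ('a \<Rightarrow> 'a \<Rightarrow> bool) \<Rightarrow> nat \<Rightarrow> int" where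
  "rel_min A B V adj n = Min ((\<lambda>I. int (A I) - int (B I)) ` {I. respects_graph V adj I \<and> length I = n})"

definition rel_max :: "('a list \<Rightarrow> nat) \<Rightarrow> ('a list \<Rightarrow> nat) \<Rightarrow> 'a set \<Rightarrow> ('a \<Rightarrow> 'a \<Rightarrow> bool) \<Rightarrow> nat \<Rightarrow> int" where
  "rel_max A B V adj n = Max ((\<lambda>I. int (A I) - int (B I)) ` {I. respects_graph V adj I \<and> length I = n})"

definition MinG :: "('a list \<Rightarrow> nat) \<Rightarrow> ('a list \<Rightarrow> nat) \<Rightarrow> 'a set \<Rightarrow> ('a \<Rightarrow> 'a \<Rightarrow> bool) \<Rightarrow> ereal" where
  "MinG A B V adj = liminf (\<lambda>n. ereal (real_of_int (rel_min A B V adj n) / real n))"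

definition MaxG :: "('a list \<Rightarrow> nat) \<Rightarrow> ('a list \<Rightarrow> nat) \<Rightarrow> 'a set \<Rightarrow> ('a \<Rightarrow> 'a \<Rightarrow> bool) \<Rightarrow> ereal" where
  "MaxG A B V adj = limsup (\<lambda>n. ereal (real_of_int (rel_max A B V adj n) / real n))"

end

theory Submission
  imports Defs
begin

text \<open>
  FWF's cache always consists of the most recently requested pages in LRU's cache, so LRU never
  faults more often than FWF. Each FWF phase (the \<open>k\<close> faults between two flushes) spans at least
  \<open>k\<close> requests and begins with a request to a page that LRU does not hold, since at a flush both
  caches contain the same \<open>k\<close> pages; hence \<open>k \<cdot> FWF \<le> k \<cdot> LRU + (k - 1) n + k\<close> on every sequence
  of length \<open>n\<close>, which gives the upper end \<open>1 - 1/k\<close>, and constant sequences give the lower end \<open>0\<close>.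
  On a cycle with more than \<open>k\<close> vertices, the walk \<open>0, \<dots>, k - 1\<close> followed by rounds
  \<open>k, k - 1, \<dots>, 1, 0, 1, \<dots>, k - 1\<close> makes FWF fault on every request, while LRU faults only on
  \<open>k\<close> and \<open>0\<close> in each round, so the upper end is attained.
\<close>

section \<open>FWF versus LRU on arbitrary request sequences\<close>

abbreviation lru_evict :: "nat \<Rightarrow> 'a list \<Rightarrow> 'a list" where
  "lru_evict k c \<equiv> if length c < k then c else butlast c"

definition recent_prefix :: "nat \<Rightarrow> 'a set \<Rightarrow> 'a list \<Rightarrow> bool" where
  "recent_prefix k C c \<longleftrightarrow> distinct c \<and> length c \<le> k \<and> C = set (take (card C) c)"

lemma recent_prefix_card:
  assumes "recent_prefix k C c"
  shows "finite C" "card C \<le> length c"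
proof -
  have d: "distinct c" and e: "C = set (take (card C) c)"
    using assms by (auto simp: recent_prefix_def)
  show "finite C" using e by (metis List.finite_set)
  have "card C = length (take (card C) c)"
    using d e by (metis distinct_card distinct_take)
  then show "card C \<le> length c" by simp
qed

lemma recent_prefix_subset: "recent_prefix k C c \<Longrightarrow> C \<subseteq> set c"
  unfolding recent_prefix_def by (metis set_take_subset)

lemma recent_prefix_full:
  assumes "recent_prefix k C c" "k \<le> card C"
  shows "C = set c"
proof -
  have "card C = length c"
    using assms recent_prefix_card(2)[OF assms(1)] by (auto simp: recent_prefix_def)
  then show ?thesis using assms(1) by (simp add: recent_prefix_def)
qed

lemma recent_prefix_move_to_front:
  assumes "recent_prefix k C c" "p \<in> C"
  shows "recent_prefix k C (p # removeAll p c)"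
proof -
  have d: "distinct c" and e: "C = set (take (card C) c)"
    using assms by (auto simp: recent_prefix_def)
  have pc: "p \<in> set c" using assms recent_prefix_subset by blast
  obtain as bs where c: "c = as @ p # bs" and pas: "p \<notin> set as"
    using split_list_first[OF pc] by blast
  have "length as < card C"
  proof (rule ccontr)
    assume "\<not> length as < card C"
    then have "take (card C) c = take (card C) as" using c by simp
    then show False using assms(2) e pas by (metis in_set_takeD)
  qed
  then have "set (take (card C) (p # removeAll p c)) = set (take (card C) c)"
    using d c by (auto simp: take_Cons')
  then show ?thesis
    using assms(1) pc length_removeAll_less[OF pc] by (auto simp: recent_prefix_def distinct_removeAll)
qed

lemma recent_prefix_insert_cached:
  assumes "recent_prefix k C c" "p \<notin> C" "p \<in> set c"
  shows "recent_prefix k (insert p C) (p # removeAll p c)"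
proof -
  have d: "distinct c" and e: "C = set (take (card C) c)"
    using assms by (auto simp: recent_prefix_def)
  obtain as bs where c: "c = as @ p # bs" and pas: "p \<notin> set as"
    using split_list_first[OF assms(3)] by blast
  have la: "card C \<le> length as"
  proof (rule ccontr)
    assume "\<not> card C \<le> length as"
    then have "p \<in> set (take (card C) c)"
      using c by (auto simp: take_Cons')
    then show False using assms(2) e by simp
  qed
  have "card (insert p C) = Suc (card C)"
    using recent_prefix_card(1)[OF assms(1)] assms(2) by simp
  moreover have "removeAll p c = as @ bs" using c d by simp
  ultimately have "set (take (card (insert p C)) (p # removeAll p c)) = insert p C"
    using la e c by simp
  then show ?thesis
    using assms(1,3) length_removeAll_less[OF assms(3)] by (auto simp: recent_prefix_def distinct_removeAll)
qed

lemma recent_prefix_insert_evict: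
  assumes "recent_prefix k C c" "p \<notin> set c" "card C < k"
  shows "recent_prefix k (insert p C) (p # lru_evict k c)"
proof -
  have "take (card C) (lru_evict k c) = take (card C) c"
    using assms(3) recent_prefix_card(2)[OF assms(1)] by (auto simp: butlast_conv_take min_def)
  moreover have "card (insert p C) = Suc (card C)"
    using recent_prefix_card(1)[OF assms(1)] assms(2) recent_prefix_subset[OF assms(1)]
    by (subst card_insert_disjoint) auto
  moreover have "distinct (lru_evict k c)" "length (lru_evict k c) < k" "p \<notin> set (lru_evict k c)"
    using assms by (auto simp: recent_prefix_def distinct_butlast dest: in_set_butlastD)
  ultimately show ?thesis
    using assms(1) by (auto simp: recent_prefix_def)
qed

lemma recent_prefix_flush:
  assumes "recent_prefix k C c" "p \<notin> set c" "1 \<le> k"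
  shows "recent_prefix k {p} (p # lru_evict k c)"
  using assms by (auto simp: recent_prefix_def distinct_butlast dest: in_set_butlastD)

text \<open>The summand \<open>card C\<close> credits the faults FWF has already made in its current phase.\<close>

lemma fwf_lru_faults_bounds:
  assumes "recent_prefix k C c" "1 \<le> k"
  shows "lru_faults k c I \<le> fwf_faults k C I \<and>
         k * fwf_faults k C I + card C \<le> k * lru_faults k c I + (k - 1) * length I + k"
  using assms(1)
proof (induction I arbitrary: C c)
  case Nil
  then show ?case using recent_prefix_card[OF Nil] assms(2) by (auto simp: recent_prefix_def)
next
  case (Cons p I)
  obtain j where k: "k = Suc j" using assms(2) by (metis Suc_le_D One_nat_def)
  have fin: "finite C" and card_le: "card C \<le> length c" and len: "length c \<le> k"
    using recent_prefix_card[OF Cons.prems] Cons.prems by (auto simp: recent_prefix_def)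
  have sub: "C \<subseteq> set c" using recent_prefix_subset[OF Cons.prems] .
  consider "p \<in> C" | "p \<notin> C" "p \<in> set c" | "p \<notin> set c" "card C < k" | "p \<notin> set c" "\<not> card C < k"
    using sub by blast
  then show ?case
  proof cases
    case 1
    with Cons.IH[OF recent_prefix_move_to_front[OF Cons.prems 1]] sub show ?thesis by auto
  next
    case 2
    have "card C < k" using recent_prefix_full[OF Cons.prems] 2 by (metis not_less)
    with 2 fin k Cons.IH[OF recent_prefix_insert_cached[OF Cons.prems 2]] show ?thesis by simp
  next
    case 3
    then have "p \<notin> C" using sub by blast
    with 3 fin k Cons.IH[OF recent_prefix_insert_evict[OF Cons.prems 3]] show ?thesis by simp
  next
    case 4
    then have "p \<notin> C" using sub by blast
    with 4 card_le len k Cons.IH[OF recent_prefix_flush[OF Cons.prems 4(1) assms(2)]] show ?thesis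
      by simp
  qed
qed

lemma LRU_le_FWF: "1 \<le> k \<Longrightarrow> LRU k I \<le> FWF k I"
  using fwf_lru_faults_bounds[of k "{}" "[]" I] by (simp add: recent_prefix_def LRU_def FWF_def)

lemma FWF_minus_LRU_le:
  assumes "1 \<le> k"
  shows "real (FWF k I) - real (LRU k I) \<le> (1 - 1 / real k) * real (length I) + 1"
proof -
  have "k * FWF k I \<le> k * LRU k I + (k - 1) * length I + k"
    using fwf_lru_faults_bounds[of k "{}" "[]" I] assms
    by (simp add: recent_prefix_def LRU_def FWF_def)
  then have "real (k * FWF k I) \<le> real (k * LRU k I + (k - 1) * length I + k)"
    by (simp only: of_nat_le_iff)
  then have "real k * real (FWF k I) \<le> real k * real (LRU k I) + (real k - 1) * real (length I) + real k"
    using assms by simp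
  then have "real (FWF k I) - real (LRU k I) \<le> ((real k - 1) * real (length I) + real k) / real k"
    using assms by (simp add: le_divide_eq algebra_simps)
  also have "\<dots> = (1 - 1 / real k) * real (length I) + 1"
    using assms by (simp add: field_simps)
  finally show ?thesis .
qed

lemma FWF_replicate_eq_LRU: "1 \<le> k \<Longrightarrow> FWF k (replicate n p) = LRU k (replicate n p)"
proof (cases n)
  case (Suc n')
  assume "1 \<le> k"
  moreover have "fwf_faults k {p} (replicate n' p) = 0" by (induction n') auto
  moreover have "lru_faults k [p] (replicate n' p) = 0" by (induction n') auto
  ultimately show ?thesis using Suc by (simp add: FWF_def LRU_def)
qed (simp add: FWF_def LRU_def)

lemma finite_respecting_lists:
  "finite V \<Longrightarrow> finite {I. respects_graph V adj I \<and> length I = n}"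
  by (rule finite_subset[OF _ finite_lists_length_eq[of V n]]) (auto simp: respects_graph_def)

lemma respects_graph_replicate: "v \<in> V \<Longrightarrow> respects_graph V adj (replicate n v)"
  by (auto simp: respects_graph_def successively_conv_nth)

lemma rel_min_le:
  assumes "finite V" "respects_graph V adj I"
  shows "rel_min A B V adj (length I) \<le> int (A I) - int (B I)"
  unfolding rel_min_def by (rule Min_le) (use assms finite_respecting_lists in auto)

lemma rel_max_ge:
  assumes "finite V" "respects_graph V adj I"
  shows "int (A I) - int (B I) \<le> rel_max A B V adj (length I)"
  unfolding rel_max_def by (rule Max_ge) (use assms finite_respecting_lists in auto)

lemma rel_min_attained:
  assumes "finite V" "v \<in> V"
  obtains I where "respects_graph V adj I" "length I = n"
    "rel_min A B V adj n = int (A I) - int (B I)"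
proof -
  let ?L = "{I. respects_graph V adj I \<and> length I = n}"
  have "replicate n v \<in> ?L" using assms by (simp add: respects_graph_replicate)
  then have "rel_min A B V adj n \<in> (\<lambda>I. int (A I) - int (B I)) ` ?L"
    unfolding rel_min_def using finite_respecting_lists[OF assms(1)] by (intro Min_in) auto
  then show ?thesis using that by blast
qed

lemma rel_max_attained:
  assumes "finite V" "v \<in> V"
  obtains I where "respects_graph V adj I" "length I = n"
    "rel_max A B V adj n = int (A I) - int (B I)"
proof -
  let ?L = "{I. respects_graph V adj I \<and> length I = n}"
  have "replicate n v \<in> ?L" using assms by (simp add: respects_graph_replicate)
  then have "rel_max A B V adj n \<in> (\<lambda>I. int (A I) - int (B I)) ` ?L"
    unfolding rel_max_def using finite_respecting_lists[OF assms(1)] by (intro Max_in) auto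
  then show ?thesis using that by blast
qed

lemma limsup_ratio_le:
  fixes f :: "nat \<Rightarrow> real"
  assumes "\<And>n. 1 \<le> n \<Longrightarrow> f n \<le> a * real n + b"
  shows "limsup (\<lambda>n. ereal (f n / real n)) \<le> ereal a"
proof -
  have "eventually (\<lambda>n. ereal (f n / real n) \<le> ereal (a + b / real n)) sequentially"
    using eventually_ge_at_top[of 1]
    by eventually_elim (use assms in \<open>simp add: divide_le_eq algebra_simps\<close>)
  then have "limsup (\<lambda>n. ereal (f n / real n)) \<le> limsup (\<lambda>n. ereal (a + b / real n))"
    by (rule Limsup_mono)
  also have "\<dots> = ereal a"
    by (intro lim_imp_Limsup) (auto intro!: tendsto_eq_intros lim_const_over_n)
  finally show ?thesis .
qed

lemma limsup_ratio_ge: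
  fixes f :: "nat \<Rightarrow> real" and g :: "nat \<Rightarrow> nat"
  assumes "strict_mono g" "\<And>m. a * real (g m) - b \<le> f (g m)"
  shows "ereal a \<le> limsup (\<lambda>n. ereal (f n / real n))"
proof -
  have "(\<lambda>m. b / real (g m)) \<longlonglongrightarrow> 0"
    using LIMSEQ_subseq_LIMSEQ[OF lim_const_over_n assms(1)] by (simp add: comp_def)
  then have "(\<lambda>m. ereal (a - b / real (g m))) \<longlonglongrightarrow> ereal a"
    unfolding lim_ereal by (auto intro: tendsto_eq_intros)
  then have "ereal a = limsup (\<lambda>m. ereal (a - b / real (g m)))"
    by (intro lim_imp_Limsup[symmetric]) simp
  also have "\<dots> \<le> limsup ((\<lambda>n. ereal (f n / real n)) \<circ> g)"
  proof (rule Limsup_mono)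
    have "eventually (\<lambda>m. 1 \<le> g m) sequentially"
      using eventually_ge_at_top[of 1] by eventually_elim (use seq_suble[OF assms(1)] le_trans in blast)
    then show "eventually (\<lambda>m. ereal (a - b / real (g m)) \<le> ((\<lambda>n. ereal (f n / real n)) \<circ> g) m) sequentially"
      by eventually_elim (use assms(2) in \<open>simp add: le_divide_eq algebra_simps\<close>)
  qed
  also have "\<dots> \<le> limsup (\<lambda>n. ereal (f n / real n))"
    by (rule limsup_subseq_mono[OF assms(1)])
  finally show ?thesis .
qed

lemma rel_min_FWF_LRU:
  assumes "finite V" "v \<in> V" "1 \<le> k"
  shows "rel_min (FWF k) (LRU k) V adj n = 0"
proof -
  obtain I where "respects_graph V adj I" "length I = n"
    "rel_min (FWF k) (LRU k) V adj n = int (FWF k I) - int (LRU k I)"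
    using rel_min_attained[OF assms(1,2)] .
  moreover have "rel_min (FWF k) (LRU k) V adj n \<le> 0"
    using rel_min_le[OF assms(1) respects_graph_replicate[OF assms(2), of adj n], of "FWF k" "LRU k"]
    by (simp add: FWF_replicate_eq_LRU[OF assms(3)])
  ultimately show ?thesis using LRU_le_FWF[OF assms(3), of I] by linarith
qed

lemma MinG_FWF_LRU:
  assumes "finite V" "v \<in> V" "1 \<le> k"
  shows "MinG (FWF k) (LRU k) V adj = 0"
  using rel_min_FWF_LRU[OF assms] by (simp add: MinG_def Liminf_const zero_ereal_def)

lemma MaxG_FWF_LRU_le:
  assumes "finite V" "v \<in> V" "1 \<le> k"
  shows "MaxG (FWF k) (LRU k) V adj \<le> ereal (1 - 1 / real k)"
  unfolding MaxG_def
proof (rule limsup_ratio_le)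
  fix n
  obtain I where "respects_graph V adj I" "length I = n"
    "rel_max (FWF k) (LRU k) V adj n = int (FWF k I) - int (LRU k I)"
    using rel_max_attained[OF assms(1,2)] .
  then show "real_of_int (rel_max (FWF k) (LRU k) V adj n) \<le> (1 - 1 / real k) * real n + 1"
    using FWF_minus_LRU_le[OF assms(3), of I] by simp
qed

section \<open>The lower bound on the cycle\<close>

lemma lru_faults_append_fresh:
  "distinct xs \<Longrightarrow> set xs \<inter> set c = {} \<Longrightarrow> length c + length xs \<le> k \<Longrightarrow>
   lru_faults k c (xs @ ys) = length xs + lru_faults k (rev xs @ c) ys"
  by (induction xs arbitrary: c) auto

lemma lru_faults_append_cached:
  "set xs \<subseteq> set c \<Longrightarrow>
   lru_faults k c (xs @ ys) = lru_faults k (fold (\<lambda>p c. p # removeAll p c) xs c) ys"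
proof (induction xs arbitrary: c)
  case (Cons a xs)
  have "set xs \<subseteq> set (a # removeAll a c)" using Cons.prems by auto
  from Cons.IH[OF this] show ?case using Cons.prems by simp
qed simp

lemma fold_move_to_front:
  "distinct xs \<Longrightarrow> fold (\<lambda>p c. p # removeAll p c) xs c = rev xs @ filter (\<lambda>x. x \<notin> set xs) c"
  by (induction xs arbitrary: c) (auto simp: removeAll_filter_not_eq intro!: filter_cong)

lemma fwf_faults_append_fresh:
  "distinct xs \<Longrightarrow> set xs \<inter> C = {} \<Longrightarrow> finite C \<Longrightarrow> card C + length xs \<le> k \<Longrightarrow>
   fwf_faults k C (xs @ ys) = length xs + fwf_faults k (C \<union> set xs) ys"
  by (induction xs arbitrary: C) auto

definition ascent :: "nat \<Rightarrow> nat list" where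
  "ascent k = [0..<k]"

definition descent :: "nat \<Rightarrow> nat list" where
  "descent k = k # rev [1..<k]"

definition zigzag :: "nat \<Rightarrow> nat \<Rightarrow> nat list" where
  "zigzag k m = ascent k @ concat (replicate m (descent k @ ascent k))"

lemma lru_faults_round:
  assumes "1 \<le> k"
  shows "lru_faults k (rev [0..<k]) (descent k @ ascent k @ ys) = 2 + lru_faults k (rev [0..<k]) ys"
proof -
  have ascent: "ascent k = 0 # [1..<k]" using assms by (simp add: ascent_def upt_conv_Cons)
  have "lru_faults k (rev [0..<k]) (descent k @ ascent k @ ys)
      = Suc (lru_faults k (k # rev [1..<k]) (rev [1..<k] @ ascent k @ ys))"
    by (simp add: descent_def)
  also have "lru_faults k (k # rev [1..<k]) (rev [1..<k] @ ascent k @ ys)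
      = lru_faults k [1..<Suc k] (ascent k @ ys)"
    using assms by (subst lru_faults_append_cached) (auto simp: fold_move_to_front filter_empty_conv)
  also have "\<dots> = Suc (lru_faults k (0 # [1..<k]) ([1..<k] @ ys))"
    unfolding ascent by simp
  also have "lru_faults k (0 # [1..<k]) ([1..<k] @ ys) = lru_faults k (rev [0..<k]) ys"
    using assms by (subst lru_faults_append_cached)
      (auto simp: fold_move_to_front filter_empty_conv upt_conv_Cons)
  finally show ?thesis by simp
qed

lemma fwf_faults_round:
  assumes "1 \<le> k"
  shows "fwf_faults k {..<k} (descent k @ ascent k @ ys) = 2 * k + fwf_faults k {..<k} ys"
proof -
  have ascent: "ascent k = 0 # [1..<k]" using assms by (simp add: ascent_def upt_conv_Cons)
  have "fwf_faults k {..<k} (descent k @ ascent k @ ys)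
      = Suc (fwf_faults k {k} (rev [1..<k] @ ascent k @ ys))"
    by (simp add: descent_def)
  also have "\<dots> = Suc ((k - 1) + fwf_faults k {1..<Suc k} (ascent k @ ys))"
    using assms by (subst fwf_faults_append_fresh) (auto simp: atLeastLessThanSuc)
  also have "fwf_faults k {1..<Suc k} (ascent k @ ys) = Suc (fwf_faults k {0} ([1..<k] @ ys))"
    unfolding ascent by simp
  also have "fwf_faults k {0} ([1..<k] @ ys) = (k - 1) + fwf_faults k {..<k} ys"
  proof -
    have "insert 0 {1..<k} = {..<k}" using assms by auto
    then show ?thesis using assms by (subst fwf_faults_append_fresh) auto
  qed
  finally show ?thesis using assms by simp
qed

lemma length_zigzag: "1 \<le> k \<Longrightarrow> length (zigzag k m) = k + 2 * k * m"
  by (simp add: zigzag_def ascent_def descent_def length_concat sum_list_replicate)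

lemma LRU_zigzag: "1 \<le> k \<Longrightarrow> LRU k (zigzag k m) = k + 2 * m"
proof -
  assume k: "1 \<le> k"
  have "lru_faults k (rev [0..<k]) (concat (replicate m (descent k @ ascent k))) = 2 * m"
    using lru_faults_round[OF k] by (induction m) auto
  then show ?thesis
    using lru_faults_append_fresh[of "[0..<k]" "[]" k] by (simp add: LRU_def zigzag_def ascent_def)
qed

lemma FWF_zigzag: "1 \<le> k \<Longrightarrow> FWF k (zigzag k m) = k + 2 * k * m"
proof -
  assume k: "1 \<le> k"
  have "fwf_faults k {..<k} (concat (replicate m (descent k @ ascent k))) = 2 * k * m"
    using fwf_faults_round[OF k] by (induction m) auto
  then show ?thesis
    using fwf_faults_append_fresh[of "[0..<k]" "{}" k] by (simp add: FWF_def zigzag_def ascent_def atLeast0LessThan)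
qed

lemma FWF_minus_LRU_zigzag:
  assumes "1 \<le> k"
  shows "real (FWF k (zigzag k m)) - real (LRU k (zigzag k m))
           = (1 - 1 / real k) * real (length (zigzag k m)) - (real k - 1)"
  using assms by (simp add: FWF_zigzag LRU_zigzag length_zigzag field_simps)

lemma successively_concat_replicate:
  assumes "successively P xs" "xs \<noteq> [] \<Longrightarrow> P (last xs) (hd xs)"
  shows "successively P (concat (replicate m xs))"
proof (induction m)
  case (Suc m)
  then show ?case using assms by (cases m) (auto simp: successively_append_iff)
qed simp

lemma respects_cycle_zigzag:
  assumes "1 \<le> k" "k < N"
  shows "respects_graph {..<N} (cycle_adj N) (zigzag k m)"
proof -
  let ?step = "\<lambda>x y. x = y \<or> cycle_adj N x y"
  have upt: "successively ?step [a..<b]" "successively (\<lambda>x y. ?step y x) [a..<b]"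
    if "b \<le> N" for a b
    using that by (auto simp: successively_conv_nth cycle_adj_def)
  have descent: "descent k = rev [1..<Suc k]" using assms by (simp add: descent_def)
  have up: "successively ?step (ascent k)" using upt(1)[of k 0] assms by (simp add: ascent_def)
  have down: "successively ?step (descent k)"
    unfolding descent successively_rev using upt(2)[of "Suc k" 1] assms by simp
  have ends: "ascent k \<noteq> []" "hd (ascent k) = 0" "last (ascent k) = k - 1"
    "descent k \<noteq> []" "hd (descent k) = k" "last (descent k) = 1"
    using assms by (simp_all add: ascent_def descent last_rev hd_rev)
  have joints: "?step (k - 1) k" "?step 1 0" using assms by (auto simp: cycle_adj_def)
  have "successively ?step (descent k @ ascent k)"
    using up down ends joints by (simp add: successively_append_iff)
  then have "successively ?step (concat (replicate m (descent k @ ascent k)))"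
    using ends joints by (intro successively_concat_replicate) simp_all
  then have "successively ?step (zigzag k m)"
    using up ends joints by (cases m) (simp_all add: zigzag_def successively_append_iff)
  moreover have "set (zigzag k m) \<subseteq> {..<N}"
    using assms by (auto simp: zigzag_def ascent_def descent_def)
  ultimately show ?thesis by (simp add: respects_graph_def)
qed

lemma MaxG_FWF_LRU_cycle_ge:
  assumes "1 \<le> k" "k < N"
  shows "ereal (1 - 1 / real k) \<le> MaxG (FWF k) (LRU k) {..<N} (cycle_adj N)"
  unfolding MaxG_def
proof (rule limsup_ratio_ge)
  show "strict_mono (\<lambda>m. length (zigzag k m))"
    using assms(1) by (intro strict_monoI) (simp add: length_zigzag)
  show "(1 - 1 / real k) * real (length (zigzag k m)) - (real k - 1)
        \<le> real_of_int (rel_max (FWF k) (LRU k) {..<N} (cycle_adj N) (length (zigzag k m)))" for m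
    using rel_max_ge[OF _ respects_cycle_zigzag[OF assms, of m], of "FWF k" "LRU k"]
    by (simp add: FWF_minus_LRU_zigzag[OF assms(1), symmetric])
qed

theorem theorem8:
  fixes k r N :: nat
  assumes "k \<ge> 2" and "1 \<le> r" and "r \<le> k - 1" and "N = k + r"
  shows "MinG (FWF k) (LRU k) {..<N} (cycle_adj N) = 0 \<and>
         MaxG (FWF k) (LRU k) {..<N} (cycle_adj N) = ereal (1 - 1 / real k)"
proof -
  have k: "1 \<le> k" and kN: "k < N" using assms by auto
  then have fin: "finite {..<N}" and zero: "0 \<in> {..<N}" by auto
  have "MinG (FWF k) (LRU k) {..<N} (cycle_adj N) = 0"
    by (rule MinG_FWF_LRU[OF fin zero k])
  moreover have "MaxG (FWF k) (LRU k) {..<N} (cycle_adj N) = ereal (1 - 1 / real k)"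
    by (intro antisym MaxG_FWF_LRU_le[OF fin zero k] MaxG_FWF_LRU_cycle_ge[OF k kN])
  ultimately show ?thesis ..
qed

end
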